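(* Suppose $k_n\sim n^a$ for some $0<a<1$, and that for some $0\le\delta<1-a$ there exist $\theta_{0n}=(\theta_{10n},\dots,\theta_{K(n)0n})$ with $\|f_{\theta_{0n}}-f_0\|_2=o(n^{-\delta})$ and $\sum_{i=1}^{K(n)}\theta_{i0n}^2=o(n^{1-\delta})$. With $\omega_n=(\theta_n,\rho)$, $\sigma_\rho=\log(1+e^\rho)$ and $\kappa>0$, let $$N_{\kappa/n^\delta}=\Big\{\omega_n:\tfrac12\log\tfrac{\sigma_\rho^2}{\sigma_0^2}-\tfrac12\Big(1-\tfrac{\sigma_0^2}{\sigma_\rho^2}\Big)+\tfrac1{2\sigma_\rho^2}\int(f_{\theta_n}(\mathbf x)-f_0(\mathbf x))^2d\mathbf x<\kappa/n^\delta\Big\}.$$ Then for every $\kappa>0$ and $\tilde\kappa>0$, with prior $p(\omega_n)=(2\pi\eta^2)^{-1/2}e^{-\rho^2/(2\eta^2)}\prod_{i=1}^{K(n)}(2\pi\zeta^2)^{-1/2}e^{-\theta_{in}^2/(2\zeta^2)}$, we have $\int_{N_{\kappa/n^\delta}}p(\omega_n)d\omega_n\ge e^{-\tilde\kappa n^{1-\delta}}$ for all sufficiently large $n$.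
   Context: $f_0$ is square integrable on $[0,1]^p$ ($p$ fixed), $\sigma_0>0$, and $\|\cdot\|_2$ is the $L_2([0,1]^p)$ norm. $\psi(u)=1/(1+e^{-u})$, $f_{\theta_n}(\mathbf x)=\beta_0+\sum_{j=1}^{k_n}\beta_j\psi(\gamma_{j0}+\sum_{h=1}^p\gamma_{jh}x_h)$, $\theta_n=(\theta_{1n},\dots,\theta_{K(n)n})$ all network parameters, $K(n)$ their number. $\eta,\zeta>0$ are fixed. *)

theory Defs
  imports "HOL-Probability.Probability" "HOL-Library.Landau_Symbols"
begin

definition sigmoid :: "real \<Rightarrow> real" where
  "sigmoid u = 1 / (1 + exp (- u))"

text \<open>Number of network parameters: beta_0, beta_1..beta_k, gamma_jh (j=1..k, h=0..p).\<close>
definition nparams :: "nat \<Rightarrow> nat \<Rightarrow> nat" where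
  "nparams p k = 1 + k * (p + 2)"

text \<open>Parameter vector theta :: nat => real, indices 0 ..< nparams p k:
  theta 0 = beta_0, theta j = beta_j (1 \<le> j \<le> k),
  theta (gidx p k j h) = gamma_jh (1 \<le> j \<le> k, 0 \<le> h \<le> p).\<close>
definition gidx :: "nat \<Rightarrow> nat \<Rightarrow> nat \<Rightarrow> nat \<Rightarrow> nat" where
  "gidx p k j h = k + (j - 1) * (p + 1) + h + 1"

text \<open>Inputs x \<in> [0,1]^p are functions nat => real with coordinates x 1, ..., x p.\<close>
definition nnet :: "nat \<Rightarrow> nat \<Rightarrow> (nat \<Rightarrow> real) \<Rightarrow> (nat \<Rightarrow> real) \<Rightarrow> real" where
  "nnet p k \<theta> x = \<theta> 0 + (\<Sum>j = 1..k. \<theta> j *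
      sigmoid (\<theta> (gidx p k j 0) + (\<Sum>h = 1..p. \<theta> (gidx p k j h) * x h)))"

definition input_space :: "nat \<Rightarrow> (nat \<Rightarrow> real) measure" where
  "input_space p = PiM {1..p} (\<lambda>_. lborel)"

definition unit_cube :: "nat \<Rightarrow> (nat \<Rightarrow> real) set" where
  "unit_cube p = PiE {1..p} (\<lambda>_. {0..1})"

definition sq_int :: "nat \<Rightarrow> ((nat \<Rightarrow> real) \<Rightarrow> real) \<Rightarrow> real" where
  "sq_int p g = (LINT x : unit_cube p | input_space p. (g x)\<^sup>2)"

definition L2dist :: "nat \<Rightarrow> ((nat \<Rightarrow> real) \<Rightarrow> real) \<Rightarrow> ((nat \<Rightarrow> real) \<Rightarrow> real) \<Rightarrow> real" where
  "L2dist p f g = sqrt (sq_int p (\<lambda>x. f x - g x))"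

definition sigma_rho :: "real \<Rightarrow> real" where
  "sigma_rho \<rho> = ln (1 + exp \<rho>)"

definition Nset :: "nat \<Rightarrow> nat \<Rightarrow> real \<Rightarrow> ((nat \<Rightarrow> real) \<Rightarrow> real) \<Rightarrow> real
    \<Rightarrow> ((nat \<Rightarrow> real) \<times> real) set" where
  "Nset p k \<sigma>0 f0 \<epsilon> = {(\<theta>, \<rho>).
      1/2 * ln ((sigma_rho \<rho>)\<^sup>2 / \<sigma>0\<^sup>2) - 1/2 * (1 - \<sigma>0\<^sup>2 / (sigma_rho \<rho>)\<^sup>2)
      + 1 / (2 * (sigma_rho \<rho>)\<^sup>2) * sq_int p (\<lambda>x. nnet p k \<theta> x - f0 x) < \<epsilon>}"

definition param_space :: "nat \<Rightarrow> ((nat \<Rightarrow> real) \<times> real) measure" where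
  "param_space K = PiM {..<K} (\<lambda>_. lborel) \<Otimes>\<^sub>M lborel"

definition prior_density :: "real \<Rightarrow> real \<Rightarrow> nat \<Rightarrow> (nat \<Rightarrow> real) \<times> real \<Rightarrow> real" where
  "prior_density \<eta> \<zeta> K \<omega> = (case \<omega> of (\<theta>, \<rho>) \<Rightarrow>
      (2 * pi * \<eta>\<^sup>2) powr (-1/2) * exp (- \<rho>\<^sup>2 / (2 * \<eta>\<^sup>2)) *
      (\<Prod>i<K. (2 * pi * \<zeta>\<^sup>2) powr (-1/2) * exp (- (\<theta> i)\<^sup>2 / (2 * \<zeta>\<^sup>2))))"

end

theory Submission
  imports Defs "HOL-Real_Asymp.Real_Asymp"
begin

text \<open>The prior mass of the neighbourhood is bounded below by the prior mass of a box around a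
near-optimal network \<open>\<theta>\<^sub>0\<^sub>n\<close> and \<open>\<rho>\<^sub>0 = ln (exp \<sigma>\<^sub>0 - 1)\<close>, the point where \<open>\<sigma>\<^sub>\<rho> = \<sigma>\<^sub>0\<close>:
half-width \<open>w = c/n\<close> in each of the \<open>K = O(n\<^sup>a)\<close> network parameters and length \<open>\<sigma>\<^sub>0 t\<close>,
\<open>t \<approx> n\<^sup>-\<^sup>\<delta>\<close>, in \<open>\<rho>\<close>. On the unit cube the network is Lipschitz in its parameters with constant
\<open>(p + 2)(1 + k + |\<theta>\<^sub>0\<^sub>n|\<^sup>2) = O(n\<^sup>1\<^sup>-\<^sup>\<delta>)\<close>, so on the box the squared \<open>L\<^sub>2\<close> error stays
\<open>O(n\<^sup>-\<^sup>\<delta>)\<close>, while the variance part of the neighbourhood condition is at most \<open>t\<close>.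
On the box the Gaussian prior density is at least \<open>exp (-(|\<theta>\<^sub>0\<^sub>n|\<^sup>2 + K)/\<zeta>\<^sup>2)\<close> up to
constants, and the box has volume \<open>(2w)\<^sup>K \<sigma>\<^sub>0 t\<close>. The logarithm of this lower bound is
\<open>-o(n\<^sup>1\<^sup>-\<^sup>\<delta>) - O(n\<^sup>a log n)\<close>, which exceeds \<open>-\<kappa>' n\<^sup>1\<^sup>-\<^sup>\<delta>\<close> because \<open>a < 1 - \<delta>\<close>.\<close>

section \<open>The sigmoid\<close>

lemma sigmoid_pos: "0 < sigmoid u"
  and sigmoid_less_1: "sigmoid u < 1"
  unfolding sigmoid_def by (auto simp: divide_simps add_pos_pos)

lemma abs_sigmoid_le_1: "\<bar>sigmoid u\<bar> \<le> 1"
  using sigmoid_pos[of u] sigmoid_less_1[of u] by simp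

lemma sigmoid_has_real_derivative:
  "(sigmoid has_real_derivative exp (- u) / (1 + exp (- u))\<^sup>2) (at u)"
proof -
  have "((\<lambda>u. 1 + exp (- u)) has_real_derivative - exp (- u)) (at u)"
    by (rule derivative_eq_intros refl | simp)+
  moreover have "1 + exp (- u) \<noteq> 0"
    using exp_gt_zero[of "- u"] by linarith
  ultimately show ?thesis
    unfolding sigmoid_def
    using DERIV_inverse_fun by (fastforce simp: inverse_eq_divide power2_eq_square)
qed

lemma sigmoid_derivative_le_1: "exp (- (u::real)) / (1 + exp (- u))\<^sup>2 \<le> 1"
proof -
  have "exp (- u) \<le> (1 + exp (- u))\<^sup>2"
    using zero_le_power2[of "exp (- u)"] by (simp add: power2_eq_square algebra_simps)
  moreover have "0 < (1 + exp (- u))\<^sup>2"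
    by (intro zero_less_power add_pos_pos) auto
  ultimately show ?thesis by (simp add: pos_divide_le_eq)
qed

lemma sigmoid_lipschitz: "\<bar>sigmoid u - sigmoid v\<bar> \<le> \<bar>u - v\<bar>"
proof -
  have "\<bar>sigmoid u - sigmoid v\<bar> \<le> u - v" if "v < u" for u v
  proof -
    obtain z where z: "sigmoid u - sigmoid v = (u - v) * (exp (- z) / (1 + exp (- z))\<^sup>2)"
      using MVT2[OF \<open>v < u\<close>, of sigmoid "\<lambda>z. exp (- z) / (1 + exp (- z))\<^sup>2"]
        sigmoid_has_real_derivative by blast
    define d where "d = exp (- z) / (1 + exp (- z))\<^sup>2"
    have "0 \<le> d" "d \<le> 1"
      unfolding d_def using sigmoid_derivative_le_1[of z] by auto
    with z that show ?thesis
      unfolding d_def[symmetric] by (simp add: abs_mult mult_left_le)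
  qed
  from this[of u v] this[of v u] show ?thesis
    by (cases u v rule: linorder_cases) (auto simp: abs_minus_commute)
qed

section \<open>The network as a function of its parameters\<close>

definition preactivation :: "nat \<Rightarrow> nat \<Rightarrow> (nat \<Rightarrow> real) \<Rightarrow> (nat \<Rightarrow> real) \<Rightarrow> nat \<Rightarrow> real" where
  "preactivation p k \<theta> x j = \<theta> (gidx p k j 0) + (\<Sum>h = 1..p. \<theta> (gidx p k j h) * x h)"

lemma nnet_eq_preactivation:
  "nnet p k \<theta> x = \<theta> 0 + (\<Sum>j = 1..k. \<theta> j * sigmoid (preactivation p k \<theta> x j))"
  unfolding nnet_def preactivation_def ..

lemma gidx_less_nparams:
  assumes "1 \<le> j" "j \<le> k" "h \<le> p"
  shows "gidx p k j h < nparams p k"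
proof -
  have "(j - 1) * (p + 1) \<le> (k - 1) * (p + 1)"
    using assms by (intro mult_le_mono1) auto
  moreover have "(k - 1) * (p + 1) + p + 1 + k = k * (p + 2)"
    using assms by (cases k) (auto simp: algebra_simps)
  ultimately show ?thesis
    using assms unfolding gidx_def nparams_def by linarith
qed

lemma less_nparams_if_le: "j \<le> k \<Longrightarrow> j < nparams p k"
  unfolding nparams_def by (cases k) auto

lemma nnet_measurable: "nnet p k \<theta> \<in> borel_measurable (input_space p)"
  unfolding nnet_def input_space_def sigmoid_def
  by (intro borel_measurable_add borel_measurable_sum borel_measurable_times borel_measurable_divide
      borel_measurable_exp borel_measurable_uminus measurable_component_singleton
      borel_measurable_const) auto

lemma abs_nnet_le: "\<bar>nnet p k \<theta> x\<bar> \<le> \<bar>\<theta> 0\<bar> + (\<Sum>j = 1..k. \<bar>\<theta> j\<bar>)"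
proof -
  have "\<bar>\<theta> j * sigmoid (preactivation p k \<theta> x j)\<bar> \<le> \<bar>\<theta> j\<bar>" for j
    unfolding abs_mult using abs_sigmoid_le_1 mult_left_le abs_ge_zero by blast
  then have "\<bar>\<Sum>j = 1..k. \<theta> j * sigmoid (preactivation p k \<theta> x j)\<bar> \<le> (\<Sum>j = 1..k. \<bar>\<theta> j\<bar>)"
    by (intro order.trans[OF sum_abs sum_mono])
  then show ?thesis
    unfolding nnet_eq_preactivation by (rule order.trans[OF abs_triangle_ineq add_left_mono])
qed

lemma abs_preactivation_diff_le:
  assumes x: "x \<in> unit_cube p" and \<theta>: "\<forall>i < nparams p k. \<bar>\<theta> i - \<theta>0 i\<bar> \<le> w"
    and j: "1 \<le> j" "j \<le> k"
  shows "\<bar>preactivation p k \<theta> x j - preactivation p k \<theta>0 x j\<bar> \<le> (1 + p) * w"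
proof -
  let ?d = "\<lambda>h. \<theta> (gidx p k j h) - \<theta>0 (gidx p k j h)"
  have d: "\<bar>?d h\<bar> \<le> w" if "h \<le> p" for h
    using \<theta> gidx_less_nparams[OF j that] by blast
  have "\<bar>?d h * x h\<bar> \<le> w" if "h \<in> {1..p}" for h
  proof -
    have "\<bar>x h\<bar> \<le> 1" using x that by (auto simp: unit_cube_def PiE_iff)
    then show ?thesis
      unfolding abs_mult using d[of h] that mult_mono[of "\<bar>?d h\<bar>" w "\<bar>x h\<bar>" 1] by simp
  qed
  then have "\<bar>\<Sum>h = 1..p. ?d h * x h\<bar> \<le> (\<Sum>h = 1..p. w)"
    by (intro order.trans[OF sum_abs sum_mono])
  moreover have "preactivation p k \<theta> x j - preactivation p k \<theta>0 x j = ?d 0 + (\<Sum>h = 1..p. ?d h * x h)"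
    unfolding preactivation_def by (simp add: algebra_simps sum_subtractf)
  ultimately show ?thesis
    using d[of 0] abs_triangle_ineq[of "?d 0" "\<Sum>h = 1..p. ?d h * x h"] by (simp add: algebra_simps)
qed

lemma abs_le_1_plus_square: "\<bar>t::real\<bar> \<le> 1 + t\<^sup>2"
proof (cases "\<bar>t\<bar> \<le> 1")
  case False
  then have "\<bar>t\<bar> * 1 \<le> \<bar>t\<bar> * \<bar>t\<bar>" by (intro mult_left_mono) auto
  then show ?thesis by (simp add: power2_eq_square abs_mult_self_eq)
qed (simp add: add_increasing2)

lemma abs_nnet_diff_le:
  assumes x: "x \<in> unit_cube p" and \<theta>: "\<forall>i < nparams p k. \<bar>\<theta> i - \<theta>0 i\<bar> \<le> w"
  shows "\<bar>nnet p k \<theta> x - nnet p k \<theta>0 x\<bar>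
    \<le> w * ((real p + 2) * (1 + real k + (\<Sum>i < nparams p k. (\<theta>0 i)\<^sup>2)))"
proof -
  let ?A = "preactivation p k \<theta> x" and ?B = "preactivation p k \<theta>0 x"
  have w: "0 \<le> w"
    using \<theta> less_nparams_if_le[of 0 k p] by force
  have unit: "\<bar>\<theta> j * sigmoid (?A j) - \<theta>0 j * sigmoid (?B j)\<bar> \<le> (real p + 2) * w * (1 + (\<theta>0 j)\<^sup>2)"
    if j: "j \<in> {1..k}" for j
  proof -
    have "\<bar>\<theta> j - \<theta>0 j\<bar> \<le> w" using \<theta> less_nparams_if_le j by auto
    moreover have "\<bar>sigmoid (?A j)\<bar> \<le> 1 + (\<theta>0 j)\<^sup>2"
      using abs_sigmoid_le_1[of "?A j"] by (simp add: add_increasing2)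
    ultimately have weight: "\<bar>(\<theta> j - \<theta>0 j) * sigmoid (?A j)\<bar> \<le> w * (1 + (\<theta>0 j)\<^sup>2)"
      unfolding abs_mult using w by (intro mult_mono) auto
    have activation: "\<bar>\<theta>0 j * (sigmoid (?A j) - sigmoid (?B j))\<bar> \<le> (1 + (\<theta>0 j)\<^sup>2) * ((1 + p) * w)"
      unfolding abs_mult using abs_le_1_plus_square[of "\<theta>0 j"] j w
        order.trans[OF sigmoid_lipschitz abs_preactivation_diff_le[OF x \<theta>]]
      by (intro mult_mono) auto
    have "\<theta> j * sigmoid (?A j) - \<theta>0 j * sigmoid (?B j)
        = (\<theta> j - \<theta>0 j) * sigmoid (?A j) + \<theta>0 j * (sigmoid (?A j) - sigmoid (?B j))"
      by (simp add: algebra_simps)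
    then have "\<bar>\<theta> j * sigmoid (?A j) - \<theta>0 j * sigmoid (?B j)\<bar>
        \<le> w * (1 + (\<theta>0 j)\<^sup>2) + (1 + (\<theta>0 j)\<^sup>2) * ((1 + p) * w)"
      using order.trans[OF abs_triangle_ineq add_mono[OF weight activation]] by simp
    also have "\<dots> = (real p + 2) * w * (1 + (\<theta>0 j)\<^sup>2)"
      by (simp add: algebra_simps)
    finally show ?thesis .
  qed
  have bias: "\<bar>\<theta> 0 - \<theta>0 0\<bar> \<le> w"
    using \<theta> less_nparams_if_le[of 0 k p] by blast
  have "\<bar>\<Sum>j = 1..k. \<theta> j * sigmoid (?A j) - \<theta>0 j * sigmoid (?B j)\<bar>
      \<le> (\<Sum>j = 1..k. (real p + 2) * w * (1 + (\<theta>0 j)\<^sup>2))"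
    by (rule order.trans[OF sum_abs sum_mono]) (rule unit)
  also have "\<dots> = (real p + 2) * w * (real k + (\<Sum>j = 1..k. (\<theta>0 j)\<^sup>2))"
    by (simp add: sum_distrib_left[symmetric] sum.distrib)
  finally have hidden: "\<bar>\<Sum>j = 1..k. \<theta> j * sigmoid (?A j) - \<theta>0 j * sigmoid (?B j)\<bar>
      \<le> (real p + 2) * w * (real k + (\<Sum>j = 1..k. (\<theta>0 j)\<^sup>2))" .
  have "nnet p k \<theta> x - nnet p k \<theta>0 x
      = (\<theta> 0 - \<theta>0 0) + (\<Sum>j = 1..k. \<theta> j * sigmoid (?A j) - \<theta>0 j * sigmoid (?B j))"
    unfolding nnet_eq_preactivation by (simp add: sum_subtractf)
  then have "\<bar>nnet p k \<theta> x - nnet p k \<theta>0 x\<bar>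
      \<le> w + (real p + 2) * w * (real k + (\<Sum>j = 1..k. (\<theta>0 j)\<^sup>2))"
    using order.trans[OF abs_triangle_ineq add_mono[OF bias hidden]] by simp
  also have "\<dots> \<le> w + (real p + 2) * w * (real k + (\<Sum>i < nparams p k. (\<theta>0 i)\<^sup>2))"
    using w by (intro add_left_mono mult_left_mono sum_mono2) (auto simp: less_nparams_if_le)
  also have "\<dots> \<le> w * ((real p + 2) * (1 + real k + (\<Sum>i < nparams p k. (\<theta>0 i)\<^sup>2)))"
    using mult_right_mono[of 1 "real p + 2" w] w by (simp add: algebra_simps)
  finally show ?thesis .
qed

section \<open>Squared \<open>L\<^sub>2\<close> distances on the unit cube\<close>

lemma unit_cube_sets: "unit_cube p \<in> sets (input_space p)"
  unfolding unit_cube_def input_space_def by (intro sets_PiM_I_finite) auto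

lemma emeasure_unit_cube: "emeasure (input_space p) (unit_cube p) = 1"
proof -
  interpret product_sigma_finite "\<lambda>_. lborel" by standard
  show ?thesis
    unfolding unit_cube_def input_space_def by (subst emeasure_PiM) auto
qed

lemma set_integrable_const_unit_cube:
  "set_integrable (input_space p) (unit_cube p) (\<lambda>_. c :: real)"
  unfolding set_integrable_def using emeasure_unit_cube[of p] unit_cube_sets[of p]
  by (intro integrable_scaleR_left integrable_indicator) auto

lemma set_integral_const_unit_cube:
  "(LINT x : unit_cube p | input_space p. c) = (c :: real)"
  using unit_cube_sets[of p] emeasure_unit_cube[of p]
  by (simp add: set_integral_const measure_def)

lemma sq_int_nonneg: "0 \<le> sq_int p g"
  unfolding sq_int_def set_lebesgue_integral_def by (intro integral_nonneg_AE) auto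

context
  fixes p :: nat and f0 :: "(nat \<Rightarrow> real) \<Rightarrow> real"
  assumes f0_measurable: "f0 \<in> borel_measurable (input_space p)"
    and f0_square_integrable: "set_integrable (input_space p) (unit_cube p) (\<lambda>x. (f0 x)\<^sup>2)"
begin

lemma set_integrable_square_diff:
  assumes g: "g \<in> borel_measurable (input_space p)" and B: "\<And>x. \<bar>g x\<bar> \<le> B"
  shows "set_integrable (input_space p) (unit_cube p) (\<lambda>x. (g x - f0 x)\<^sup>2)"
  unfolding set_integrable_def
proof (rule Bochner_Integration.integrable_bound)
  have "set_integrable (input_space p) (unit_cube p) (\<lambda>x. 2 * B\<^sup>2 + 2 * (f0 x)\<^sup>2)"
    by (intro set_integral_add(1) set_integrable_const_unit_cube set_integrable_mult_right
        f0_square_integrable)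
  then show "integrable (input_space p) (\<lambda>x. indicator (unit_cube p) x *\<^sub>R (2 * B\<^sup>2 + 2 * (f0 x)\<^sup>2))"
    unfolding set_integrable_def .
  show "(\<lambda>x. indicator (unit_cube p) x *\<^sub>R (g x - f0 x)\<^sup>2) \<in> borel_measurable (input_space p)"
    using g f0_measurable unit_cube_sets by measurable
  have "(g x - f0 x)\<^sup>2 \<le> 2 * B\<^sup>2 + 2 * (f0 x)\<^sup>2" for x
  proof -
    have "(g x)\<^sup>2 \<le> B\<^sup>2" using B[of x] by (metis abs_ge_zero power2_abs power_mono)
    moreover have "(g x - f0 x)\<^sup>2 \<le> 2 * (g x)\<^sup>2 + 2 * (f0 x)\<^sup>2"
      using zero_le_power2[of "g x + f0 x"] by (simp add: power2_eq_square algebra_simps)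
    ultimately show ?thesis by linarith
  qed
  then show "AE x in input_space p. norm (indicator (unit_cube p) x *\<^sub>R (g x - f0 x)\<^sup>2)
      \<le> norm (indicator (unit_cube p) x *\<^sub>R (2 * B\<^sup>2 + 2 * (f0 x)\<^sup>2))"
    by (intro AE_I2) (auto simp: indicator_def)
qed

lemma sq_int_diff_le:
  assumes g: "g \<in> borel_measurable (input_space p)" "\<And>x. \<bar>g x\<bar> \<le> Bg"
    and h: "h \<in> borel_measurable (input_space p)" "\<And>x. \<bar>h x\<bar> \<le> Bh"
    and close: "\<And>x. x \<in> unit_cube p \<Longrightarrow> \<bar>g x - h x\<bar> \<le> D"
  shows "sq_int p (\<lambda>x. g x - f0 x) \<le> 2 * sq_int p (\<lambda>x. h x - f0 x) + 2 * D\<^sup>2"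
proof -
  have h_int: "set_integrable (input_space p) (unit_cube p) (\<lambda>x. (h x - f0 x)\<^sup>2)"
    by (rule set_integrable_square_diff[OF h])
  have "sq_int p (\<lambda>x. g x - f0 x)
      \<le> (LINT x : unit_cube p | input_space p. 2 * (h x - f0 x)\<^sup>2 + 2 * D\<^sup>2)"
    unfolding sq_int_def
  proof (rule set_integral_mono)
    show "set_integrable (input_space p) (unit_cube p) (\<lambda>x. (g x - f0 x)\<^sup>2)"
      by (rule set_integrable_square_diff[OF g])
    show "set_integrable (input_space p) (unit_cube p) (\<lambda>x. 2 * (h x - f0 x)\<^sup>2 + 2 * D\<^sup>2)"
      by (intro set_integral_add(1) set_integrable_const_unit_cube set_integrable_mult_right h_int)
    fix x assume x: "x \<in> unit_cube p"
    have "(g x - h x)\<^sup>2 \<le> D\<^sup>2" using close[OF x] by (metis abs_ge_zero power2_abs power_mono)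
    moreover have "(g x - f0 x)\<^sup>2 \<le> 2 * (h x - f0 x)\<^sup>2 + 2 * (g x - h x)\<^sup>2"
      using zero_le_power2[of "(h x - f0 x) - (g x - h x)"] by (simp add: power2_eq_square algebra_simps)
    ultimately show "(g x - f0 x)\<^sup>2 \<le> 2 * (h x - f0 x)\<^sup>2 + 2 * D\<^sup>2" by linarith
  qed
  also have "\<dots> = 2 * sq_int p (\<lambda>x. h x - f0 x) + 2 * D\<^sup>2"
    unfolding sq_int_def using h_int set_integrable_const_unit_cube
    by (subst set_integral_add(2)) (auto simp: set_integral_const_unit_cube)
  finally show ?thesis .
qed

end

section \<open>The neighbourhood\<close>

lemma sigma_rho_mono: "\<rho> \<le> \<rho>' \<Longrightarrow> sigma_rho \<rho> \<le> sigma_rho \<rho>'"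
  unfolding sigma_rho_def by (simp add: add_pos_pos)

lemma sigma_rho_add_le:
  assumes "0 \<le> u"
  shows "sigma_rho (\<rho> + u) \<le> sigma_rho \<rho> + u"
proof -
  have "1 + exp (\<rho> + u) \<le> exp u * (1 + exp \<rho>)"
    using assms by (simp add: exp_add algebra_simps)
  then have "ln (1 + exp (\<rho> + u)) \<le> ln (exp u * (1 + exp \<rho>))"
    by (simp add: add_pos_pos)
  moreover have "0 < 1 + exp \<rho>" by (simp add: add_pos_pos)
  ultimately show ?thesis
    unfolding sigma_rho_def by (simp add: ln_mult)
qed

lemma sigma_rho_ln_exp_minus_1: "0 < s \<Longrightarrow> sigma_rho (ln (exp s - 1)) = s"
  unfolding sigma_rho_def by simp

lemma normal_kl_variance_le:
  fixes \<sigma>0 s t :: real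
  assumes "0 < \<sigma>0" "\<sigma>0 \<le> s" "s \<le> \<sigma>0 * (1 + t)"
  shows "1/2 * ln (s\<^sup>2 / \<sigma>0\<^sup>2) - 1/2 * (1 - \<sigma>0\<^sup>2 / s\<^sup>2) \<le> t"
proof -
  have "0 < s" using assms by linarith
  have "ln (s\<^sup>2 / \<sigma>0\<^sup>2) = 2 * ln (s / \<sigma>0)"
    using \<open>0 < s\<close> assms by (simp add: power_divide[symmetric] ln_realpow)
  also have "ln (s / \<sigma>0) \<le> s / \<sigma>0 - 1"
    using \<open>0 < s\<close> assms by (intro ln_le_minus_one) auto
  also have "s / \<sigma>0 - 1 \<le> t"
    using assms by (simp add: field_simps)
  finally have "1/2 * ln (s\<^sup>2 / \<sigma>0\<^sup>2) \<le> t" by linarith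
  moreover have "0 \<le> 1/2 * (1 - \<sigma>0\<^sup>2 / s\<^sup>2)"
    using \<open>0 < s\<close> assms by (simp add: power_mono)
  ultimately show ?thesis by linarith
qed

lemma mem_NsetI:
  fixes \<sigma>0 t \<rho> \<epsilon> :: real
  defines "\<rho>0 \<equiv> ln (exp \<sigma>0 - 1)"
  assumes "0 < \<sigma>0" "0 \<le> t" "\<rho> \<in> {\<rho>0 .. \<rho>0 + \<sigma>0 * t}"
    and fit: "t + sq_int p (\<lambda>x. nnet p k \<theta> x - f0 x) / (2 * \<sigma>0\<^sup>2) < \<epsilon>"
  shows "(\<theta>, \<rho>) \<in> Nset p k \<sigma>0 f0 \<epsilon>"
proof -
  define s where "s = sigma_rho \<rho>"
  define q where "q = sq_int p (\<lambda>x. nnet p k \<theta> x - f0 x)"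
  have "sigma_rho \<rho>0 = \<sigma>0"
    unfolding \<rho>0_def using assms by (simp add: sigma_rho_ln_exp_minus_1)
  then have s: "\<sigma>0 \<le> s" "s \<le> \<sigma>0 * (1 + t)"
    using assms sigma_rho_mono[of \<rho>0 \<rho>] sigma_rho_add_le[of "\<sigma>0 * t" \<rho>0]
      sigma_rho_mono[of \<rho> "\<rho>0 + \<sigma>0 * t"]
    unfolding s_def by (auto simp: algebra_simps)
  have "q / (2 * s\<^sup>2) \<le> q / (2 * \<sigma>0\<^sup>2)"
    using s assms sq_int_nonneg unfolding q_def by (intro divide_left_mono mult_pos_pos) (auto simp: power_mono)
  with normal_kl_variance_le[OF \<open>0 < \<sigma>0\<close> s] fit
  show ?thesis unfolding Nset_def s_def q_def by simp
qed

lemma mem_Nset_if_near: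
  fixes p k :: nat and \<theta>0 :: "nat \<Rightarrow> real"
  assumes f0_measurable: "f0 \<in> borel_measurable (input_space p)"
    and f0_square_integrable: "set_integrable (input_space p) (unit_cube p) (\<lambda>x. (f0 x)\<^sup>2)"
    and \<sigma>0: "0 < \<sigma>0" and t: "0 < t" "t \<le> \<epsilon> / 4"
    and \<theta>: "\<forall>i < nparams p k. \<bar>\<theta> i - \<theta>0 i\<bar> \<le> w"
    and \<rho>: "\<rho> \<in> {ln (exp \<sigma>0 - 1) .. ln (exp \<sigma>0 - 1) + \<sigma>0 * t}"
    and fit: "(L2dist p (nnet p k \<theta>0) f0)\<^sup>2
      + (w * ((real p + 2) * (1 + real k + (\<Sum>i < nparams p k. (\<theta>0 i)\<^sup>2))))\<^sup>2 \<le> \<sigma>0\<^sup>2 * \<epsilon> / 2"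
  shows "(\<theta>, \<rho>) \<in> Nset p k \<sigma>0 f0 \<epsilon>"
proof -
  have "sq_int p (\<lambda>x. nnet p k \<theta> x - f0 x) \<le> 2 * sq_int p (\<lambda>x. nnet p k \<theta>0 x - f0 x)
      + 2 * (w * ((real p + 2) * (1 + real k + (\<Sum>i < nparams p k. (\<theta>0 i)\<^sup>2))))\<^sup>2"
    using abs_nnet_diff_le[OF _ \<theta>]
    by (intro sq_int_diff_le[OF f0_measurable f0_square_integrable nnet_measurable abs_nnet_le
          nnet_measurable abs_nnet_le])
  moreover have "sq_int p (\<lambda>x. nnet p k \<theta>0 x - f0 x) = (L2dist p (nnet p k \<theta>0) f0)\<^sup>2"
    unfolding L2dist_def using sq_int_nonneg by simp
  ultimately have "sq_int p (\<lambda>x. nnet p k \<theta> x - f0 x) \<le> \<sigma>0\<^sup>2 * \<epsilon>"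
    using fit by linarith
  then have "sq_int p (\<lambda>x. nnet p k \<theta> x - f0 x) / (2 * \<sigma>0\<^sup>2) \<le> \<sigma>0\<^sup>2 * \<epsilon> / (2 * \<sigma>0\<^sup>2)"
    using \<sigma>0 by (intro divide_right_mono) auto
  also have "\<dots> = \<epsilon> / 2"
    using \<sigma>0 by simp
  finally have "t + sq_int p (\<lambda>x. nnet p k \<theta> x - f0 x) / (2 * \<sigma>0\<^sup>2) < \<epsilon>"
    using t by linarith
  then show ?thesis
    using \<sigma>0 t(1) \<rho> by (intro mem_NsetI) auto
qed

section \<open>The prior\<close>

lemma prior_density_ge:
  fixes \<theta> \<theta>0 :: "nat \<Rightarrow> real"
  assumes "0 < \<eta>" "0 < \<zeta>" "\<bar>\<rho>\<bar> \<le> r" "\<forall>i < K. \<bar>\<theta> i - \<theta>0 i\<bar> \<le> 1"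
  shows "(2 * pi * \<eta>\<^sup>2) powr (-1/2) * exp (- r\<^sup>2 / (2 * \<eta>\<^sup>2))
      * ((2 * pi * \<zeta>\<^sup>2) powr (-1/2)) ^ K * exp (- ((\<Sum>i<K. (\<theta>0 i)\<^sup>2) + K) / \<zeta>\<^sup>2)
    \<le> prior_density \<eta> \<zeta> K (\<theta>, \<rho>)"
proof -
  let ?c = "(2 * pi * \<zeta>\<^sup>2) powr (-1/2)"
  have coordinate: "?c * exp (- ((\<theta>0 i)\<^sup>2 + 1) / \<zeta>\<^sup>2) \<le> ?c * exp (- (\<theta> i)\<^sup>2 / (2 * \<zeta>\<^sup>2))"
    if "i < K" for i
  proof -
    have "\<bar>\<theta> i\<bar> \<le> \<bar>\<theta>0 i\<bar> + 1" using assms that by force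
    then have "(\<theta> i)\<^sup>2 \<le> (\<bar>\<theta>0 i\<bar> + 1)\<^sup>2"
      by (metis abs_ge_zero power2_abs power_mono)
    also have "\<dots> \<le> 2 * ((\<theta>0 i)\<^sup>2 + 1)"
      using zero_le_power2[of "\<bar>\<theta>0 i\<bar> - 1"] by (simp add: power2_eq_square algebra_simps)
    finally have "(\<theta> i)\<^sup>2 / (2 * \<zeta>\<^sup>2) \<le> ((\<theta>0 i)\<^sup>2 + 1) / \<zeta>\<^sup>2"
      using assms by (simp add: field_simps)
    then show ?thesis
      by (intro mult_left_mono) (simp_all only: minus_divide_left[symmetric] exp_le_cancel_iff, auto)
  qed
  have "?c ^ K * exp (- ((\<Sum>i<K. (\<theta>0 i)\<^sup>2) + K) / \<zeta>\<^sup>2) = (\<Prod>i<K. ?c * exp (- ((\<theta>0 i)\<^sup>2 + 1) / \<zeta>\<^sup>2))"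
    by (simp add: prod.distrib exp_sum[symmetric] sum_divide_distrib[symmetric] sum_subtractf sum_negf)
  also have "\<dots> \<le> (\<Prod>i<K. ?c * exp (- (\<theta> i)\<^sup>2 / (2 * \<zeta>\<^sup>2)))"
    by (rule prod_mono) (use coordinate in auto)
  finally have \<theta>_part: "?c ^ K * exp (- ((\<Sum>i<K. (\<theta>0 i)\<^sup>2) + K) / \<zeta>\<^sup>2) \<le> \<dots>" .
  have "\<rho>\<^sup>2 \<le> r\<^sup>2"
    using assms by (metis abs_ge_zero power2_abs power_mono)
  then have "exp (- r\<^sup>2 / (2 * \<eta>\<^sup>2)) \<le> exp (- \<rho>\<^sup>2 / (2 * \<eta>\<^sup>2))"
    using assms by (simp add: divide_right_mono)
  with \<theta>_part show ?thesis
    unfolding prior_density_def by (auto simp: mult.assoc intro!: mult_mono)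
qed

lemma param_box_sets:
  "(\<Pi>\<^sub>E i\<in>{..<K}. {c i - w .. c i + w}) \<times> {r0..r1} \<in> sets (param_space K)"
  unfolding param_space_def by (intro pair_measureI sets_PiM_I_finite) auto

lemma emeasure_param_box:
  assumes "0 \<le> w" "r0 \<le> r1"
  shows "emeasure (param_space K) ((\<Pi>\<^sub>E i\<in>{..<K}. {c i - w .. c i + w}) \<times> {r0..r1})
    = ennreal ((2 * w) ^ K * (r1 - r0))"
proof -
  interpret product_sigma_finite "\<lambda>_. lborel" by standard
  have "emeasure (param_space K) ((\<Pi>\<^sub>E i\<in>{..<K}. {c i - w .. c i + w}) \<times> {r0..r1})
      = emeasure (PiM {..<K} (\<lambda>_. lborel)) (\<Pi>\<^sub>E i\<in>{..<K}. {c i - w .. c i + w})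
        * emeasure lborel {r0..r1}"
    unfolding param_space_def
    by (rule lborel.emeasure_pair_measure_Times) (auto intro!: sets_PiM_I_finite)
  also have "\<dots> = (\<Prod>i<K. ennreal (2 * w)) * ennreal (r1 - r0)"
    using assms by (subst emeasure_PiM) auto
  also have "\<dots> = ennreal ((2 * w) ^ K) * ennreal (r1 - r0)"
    using assms by (simp add: ennreal_power)
  also have "\<dots> = ennreal ((2 * w) ^ K * (r1 - r0))"
    using assms by (simp add: ennreal_mult)
  finally show ?thesis .
qed

lemma nn_set_integral_ge_emeasure:
  assumes "A \<in> sets M" "A \<subseteq> N" "\<And>\<omega>. \<omega> \<in> A \<Longrightarrow> c \<le> f \<omega>"
  shows "ennreal c * emeasure M A \<le> (\<integral>\<^sup>+\<omega>\<in>N. ennreal (f \<omega>) \<partial>M)"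
proof -
  have "ennreal c * emeasure M A = (\<integral>\<^sup>+\<omega>. ennreal c * indicator A \<omega> \<partial>M)"
    using assms(1) by (simp add: nn_integral_cmult_indicator)
  also have "\<dots> \<le> (\<integral>\<^sup>+\<omega>\<in>N. ennreal (f \<omega>) \<partial>M)"
    using assms(2,3) by (intro nn_integral_mono) (auto simp: indicator_def intro: ennreal_leI)
  finally show ?thesis .
qed

lemma prior_mass_Nset_ge:
  fixes p k :: nat and \<theta>0 :: "nat \<Rightarrow> real"
  defines "K \<equiv> nparams p k" and "S \<equiv> \<Sum>i < nparams p k. (\<theta>0 i)\<^sup>2"
  assumes f0_measurable: "f0 \<in> borel_measurable (input_space p)"
    and f0_square_integrable: "set_integrable (input_space p) (unit_cube p) (\<lambda>x. (f0 x)\<^sup>2)"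
    and \<sigma>0: "0 < \<sigma>0" and \<eta>: "0 < \<eta>" and \<zeta>: "0 < \<zeta>"
    and w: "0 < w" "w \<le> 1" and t: "0 < t" "t \<le> 1" "t \<le> \<epsilon> / 4"
    and fit: "(L2dist p (nnet p k \<theta>0) f0)\<^sup>2 + (w * ((real p + 2) * (1 + real k + S)))\<^sup>2 \<le> \<sigma>0\<^sup>2 * \<epsilon> / 2"
  shows "ennreal ((2 * pi * \<eta>\<^sup>2) powr (-1/2) * exp (- (\<bar>ln (exp \<sigma>0 - 1)\<bar> + \<sigma>0)\<^sup>2 / (2 * \<eta>\<^sup>2)) * (\<sigma>0 * t)
      * exp (- (S + K) / \<zeta>\<^sup>2) * (2 * (2 * pi * \<zeta>\<^sup>2) powr (-1/2) * w) ^ K)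
    \<le> (\<integral>\<^sup>+\<omega>\<in>Nset p k \<sigma>0 f0 \<epsilon>. ennreal (prior_density \<eta> \<zeta> K \<omega>) \<partial>param_space K)"
proof -
  define \<rho>0 where "\<rho>0 = ln (exp \<sigma>0 - 1)"
  define box where "box = (\<Pi>\<^sub>E i\<in>{..<K}. {\<theta>0 i - w .. \<theta>0 i + w}) \<times> {\<rho>0 .. \<rho>0 + \<sigma>0 * t}"
  have in_box: "\<forall>i < K. \<bar>\<theta> i - \<theta>0 i\<bar> \<le> w" "\<rho> \<in> {\<rho>0 .. \<rho>0 + \<sigma>0 * t}" if "(\<theta>, \<rho>) \<in> box" for \<theta> \<rho>
    using that unfolding box_def by (force simp: PiE_iff abs_le_iff)+
  have box_subset: "box \<subseteq> Nset p k \<sigma>0 f0 \<epsilon>"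
    using in_box fit unfolding K_def S_def \<rho>0_def
    by (auto intro!: mem_Nset_if_near[OF f0_measurable f0_square_integrable \<sigma>0 t(1,3)])
  define c where "c = (2 * pi * \<eta>\<^sup>2) powr (-1/2) * exp (- (\<bar>\<rho>0\<bar> + \<sigma>0)\<^sup>2 / (2 * \<eta>\<^sup>2))
      * ((2 * pi * \<zeta>\<^sup>2) powr (-1/2)) ^ K * exp (- (S + K) / \<zeta>\<^sup>2)"
  have density_ge: "c \<le> prior_density \<eta> \<zeta> K \<omega>" if "\<omega> \<in> box" for \<omega>
  proof -
    obtain \<theta> \<rho> where \<omega>: "\<omega> = (\<theta>, \<rho>)" by fastforce
    have "\<sigma>0 * t \<le> \<sigma>0"
      using \<sigma>0 t by (intro mult_left_le) auto
    moreover have "\<rho>0 \<le> \<rho>" "\<rho> \<le> \<rho>0 + \<sigma>0 * t"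
      using in_box(2)[OF that[unfolded \<omega>]] by auto
    ultimately have "\<rho> \<le> \<bar>\<rho>0\<bar> + \<sigma>0" "- \<rho> \<le> \<bar>\<rho>0\<bar> + \<sigma>0"
      using abs_ge_self[of \<rho>0] abs_ge_minus_self[of \<rho>0] by linarith+
    then have "\<bar>\<rho>\<bar> \<le> \<bar>\<rho>0\<bar> + \<sigma>0"
      by (simp add: abs_le_iff)
    moreover have "\<forall>i < K. \<bar>\<theta> i - \<theta>0 i\<bar> \<le> 1"
      using in_box(1)[OF that[unfolded \<omega>]] w by force
    ultimately show ?thesis
      unfolding \<omega> c_def S_def K_def using prior_density_ge[OF \<eta> \<zeta>] by blast
  qed
  have "box \<in> sets (param_space K)"
    unfolding box_def by (rule param_box_sets)
  then have mass: "ennreal c * emeasure (param_space K) box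
      \<le> (\<integral>\<^sup>+\<omega>\<in>Nset p k \<sigma>0 f0 \<epsilon>. ennreal (prior_density \<eta> \<zeta> K \<omega>) \<partial>param_space K)"
    using box_subset density_ge by (rule nn_set_integral_ge_emeasure)
  have "emeasure (param_space K) box = ennreal ((2 * w) ^ K * (\<sigma>0 * t))"
    unfolding box_def using w t \<sigma>0 by (subst emeasure_param_box) auto
  moreover have "0 \<le> c"
    unfolding c_def by simp
  ultimately have measure_eq: "ennreal c * emeasure (param_space K) box
      = ennreal (c * ((2 * w) ^ K * (\<sigma>0 * t)))"
    by (simp add: ennreal_mult')
  have regroup: "c * ((2 * w) ^ K * (\<sigma>0 * t))
      = (2 * pi * \<eta>\<^sup>2) powr (-1/2) * exp (- (\<bar>\<rho>0\<bar> + \<sigma>0)\<^sup>2 / (2 * \<eta>\<^sup>2)) * (\<sigma>0 * t)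
        * exp (- (S + K) / \<zeta>\<^sup>2) * (2 * (2 * pi * \<zeta>\<^sup>2) powr (-1/2) * w) ^ K"
    unfolding c_def power_mult_distrib by (simp only: mult_ac)
  show ?thesis
    using mass unfolding measure_eq regroup \<rho>0_def .
qed

section \<open>Asymptotics\<close>

lemma power2_le_if_abs_le: "\<bar>u\<bar> \<le> v \<Longrightarrow> v \<le> 1 \<Longrightarrow> u\<^sup>2 \<le> (v::real)"
  using mult_mono[of "\<bar>u\<bar>" v "\<bar>u\<bar>" 1] by (simp add: power2_eq_square abs_mult_self_eq)

lemma eventually_fit_bound:
  fixes L M :: "nat \<Rightarrow> real"
  assumes \<delta>: "0 \<le> \<delta>" and \<epsilon>: "0 < \<epsilon>"
    and L: "L \<in> o(\<lambda>n. real n powr - \<delta>)" and M: "M \<in> O(\<lambda>n. real n powr (1 - \<delta>))"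
  shows "\<exists>c > 0. \<forall>\<^sub>F n in at_top.
    c / real n \<le> 1 \<and> (L n)\<^sup>2 + (c / real n * M n)\<^sup>2 \<le> \<epsilon> * real n powr - \<delta>"
proof -
  define e where "e = min 1 (\<epsilon> / 2)"
  have e: "0 < e" "e \<le> 1" "e \<le> \<epsilon> / 2" unfolding e_def using \<epsilon> by auto
  obtain B where B: "B > 0" "\<forall>\<^sub>F n in at_top. \<bar>M n\<bar> \<le> B * real n powr (1 - \<delta>)"
    using landau_o.bigE[OF M] by auto
  define c where "c = e / B"
  have "c > 0" unfolding c_def using e B by simp
  then have "\<forall>\<^sub>F n in at_top. c / real n \<le> 1" by real_asymp
  moreover have "\<forall>\<^sub>F n in at_top. \<bar>L n\<bar> \<le> e * real n powr - \<delta>"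
    using landau_o.smallD[OF L e(1)] by simp
  ultimately have "\<forall>\<^sub>F n in at_top.
      c / real n \<le> 1 \<and> (L n)\<^sup>2 + (c / real n * M n)\<^sup>2 \<le> \<epsilon> * real n powr - \<delta>"
    using B(2) eventually_gt_at_top[of 0]
  proof eventually_elim
    case (elim n)
    have "real n powr - \<delta> \<le> 1"
      using elim \<delta> by (simp add: powr_minus_divide ge_one_powr_ge_zero)
    then have small: "e * real n powr - \<delta> \<le> 1"
      using e by (simp add: mult_le_one)
    have "c / real n * B * real n powr (1 - \<delta>) = e * real n powr - \<delta>"
      unfolding c_def using B elim by (simp add: powr_diff powr_minus_divide)
    then have "\<bar>c / real n * M n\<bar> \<le> e * real n powr - \<delta>"
      using elim \<open>c > 0\<close> mult_left_mono[OF elim(3), of "c / real n"] by (simp add: abs_mult)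
    then have "(c / real n * M n)\<^sup>2 \<le> e * real n powr - \<delta>"
      using small by (rule power2_le_if_abs_le)
    moreover have "(L n)\<^sup>2 \<le> e * real n powr - \<delta>"
      using elim(2) small by (rule power2_le_if_abs_le)
    moreover have "e * real n powr - \<delta> \<le> \<epsilon> / 2 * real n powr - \<delta>"
      using e by (intro mult_right_mono) auto
    ultimately show ?case
      using elim(1) by simp
  qed
  with \<open>c > 0\<close> show ?thesis by blast
qed

lemma eventually_exp_le_mass_bound:
  fixes K :: "nat \<Rightarrow> nat" and S :: "nat \<Rightarrow> real"
  assumes "0 < a" "0 \<le> \<delta>" "a < 1 - \<delta>" "0 < \<kappa>" "0 < C" "0 < b" "0 < s"
    and K: "(\<lambda>n. real (K n)) \<in> O(\<lambda>n. real n powr a)"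
    and S: "S \<in> o(\<lambda>n. real n powr (1 - \<delta>))"
  shows "\<forall>\<^sub>F n in at_top. exp (- \<kappa> * real n powr (1 - \<delta>))
    \<le> C * real n powr - \<delta> * exp (- (S n + K n) / s) * (b / real n) ^ K n"
proof -
  obtain A where A: "A > 0" "\<forall>\<^sub>F n in at_top. real (K n) \<le> A * real n powr a"
    using landau_o.bigE[OF K] by auto
  have "\<forall>\<^sub>F n in at_top. \<bar>S n\<bar> \<le> s * \<kappa> / 2 * real n powr (1 - \<delta>)"
    using landau_o.smallD[OF S, of "s * \<kappa> / 2"] assms by simp
  moreover have "\<forall>\<^sub>F n in at_top. A * real n powr a * (1 / s + \<bar>ln b\<bar> + ln (real n))
      + \<delta> * ln (real n) - ln C \<le> \<kappa> * real n powr (1 - \<delta>) / 2"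
    using assms A(1) by real_asymp
  ultimately show ?thesis
    using A(2) eventually_ge_at_top[of 1]
  proof eventually_elim
    case (elim n)
    define x where "x = real n"
    define V where "V = C * x powr - \<delta> * exp (- (S n + K n) / s) * (b / x) ^ K n"
    define Y where "Y = 1 / s + \<bar>ln b\<bar> + ln x"
    have x: "1 \<le> x" using elim unfolding x_def by simp
    have "0 < V" unfolding V_def using x assms by simp
    have "ln V = ln C - \<delta> * ln x - S n / s + (K n * ln b - K n / s - K n * ln x)"
      unfolding V_def using x assms
      by (simp add: ln_mult ln_div ln_realpow field_simps)
    moreover have "K n * ln b - K n / s - K n * ln x \<ge> - (A * x powr a * Y)"
    proof -
      have "K n * Y \<le> A * x powr a * Y"
        using elim x \<open>0 < s\<close> unfolding x_def Y_def by (intro mult_right_mono add_nonneg_nonneg) auto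
      moreover have "0 \<le> K n * ln b + K n * \<bar>ln b\<bar>"
        using mult_left_mono[OF abs_ge_minus_self[of "ln b"], of "real (K n)"] by simp
      moreover have "K n * Y = K n / s + K n * \<bar>ln b\<bar> + K n * ln x"
        unfolding Y_def by (simp add: algebra_simps)
      ultimately show ?thesis by linarith
    qed
    moreover have "S n / s \<le> \<kappa> * x powr (1 - \<delta>) / 2"
    proof -
      have "S n \<le> s * (\<kappa> * x powr (1 - \<delta>) / 2)"
        using elim(1) abs_ge_self[of "S n"] unfolding x_def by (simp add: mult_ac)
      then show ?thesis
        using \<open>0 < s\<close> by (simp add: pos_divide_le_eq mult.commute)
    qed
    moreover have "A * x powr a * Y + \<delta> * ln x - ln C \<le> \<kappa> * x powr (1 - \<delta>) / 2"
      using elim(2) unfolding x_def Y_def .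
    ultimately have "- (\<kappa> * x powr (1 - \<delta>)) \<le> ln V"
      by linarith
    then have "exp (- \<kappa> * x powr (1 - \<delta>)) \<le> V"
      using \<open>0 < V\<close> by (metis exp_le_cancel_iff exp_ln minus_mult_left)
    then show ?case unfolding V_def x_def .
  qed
qed

lemma network_size_bigo:
  fixes k :: "nat \<Rightarrow> nat" and S :: "nat \<Rightarrow> real"
  assumes kn: "(\<lambda>n. real (k n)) \<sim>[at_top] (\<lambda>n. real n powr a)"
    and "0 < a" "0 \<le> \<delta>" "a < 1 - \<delta>" and S: "S \<in> o(\<lambda>n. real n powr (1 - \<delta>))"
  shows "(\<lambda>n. real (nparams p (k n))) \<in> O(\<lambda>n. real n powr a)"
    and "(\<lambda>n. (real p + 2) * (1 + real (k n) + S n)) \<in> O(\<lambda>n. real n powr (1 - \<delta>))"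
proof -
  have k: "(\<lambda>n. real (k n)) \<in> O(\<lambda>n. real n powr a)"
    using asymp_equiv_imp_bigo[OF kn] .
  have "(\<lambda>_. 1) \<in> O(\<lambda>n. real n powr a)"
    using assms by real_asymp
  then have "(\<lambda>n. 1 + (real p + 2) * real (k n)) \<in> O(\<lambda>n. real n powr a)"
    using k by (intro sum_in_bigo(1)) simp_all
  then show "(\<lambda>n. real (nparams p (k n))) \<in> O(\<lambda>n. real n powr a)"
    unfolding nparams_def by (simp add: algebra_simps)
  have "(\<lambda>n. real n powr a) \<in> O(\<lambda>n. real n powr (1 - \<delta>))" "(\<lambda>_. 1) \<in> O(\<lambda>n. real n powr (1 - \<delta>))"
    using assms by real_asymp+
  then have "(\<lambda>n. 1 + real (k n) + S n) \<in> O(\<lambda>n. real n powr (1 - \<delta>))"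
    by (intro sum_in_bigo(1) landau_o.big_trans[OF k] landau_o.small_imp_big[OF S])
  then show "(\<lambda>n. (real p + 2) * (1 + real (k n) + S n)) \<in> O(\<lambda>n. real n powr (1 - \<delta>))"
    by simp
qed

theorem proposition8:
  fixes p :: nat and f0 :: "(nat \<Rightarrow> real) \<Rightarrow> real" and \<sigma>0 \<eta> \<zeta> a \<delta> :: real
    and k :: "nat \<Rightarrow> nat"
  assumes f0_meas: "f0 \<in> borel_measurable (input_space p)"
    and f0_sq: "set_integrable (input_space p) (unit_cube p) (\<lambda>x. (f0 x)\<^sup>2)"
    and \<sigma>0: "\<sigma>0 > 0" and \<eta>: "\<eta> > 0" and \<zeta>: "\<zeta> > 0"
    and a: "0 < a" "a < 1"
    and kn: "(\<lambda>n. real (k n)) \<sim>[at_top] (\<lambda>n. real n powr a)"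
    and \<delta>: "0 \<le> \<delta>" "\<delta> < 1 - a"
    and approx: "\<exists>\<theta>0 :: nat \<Rightarrow> nat \<Rightarrow> real.
        (\<lambda>n. L2dist p (nnet p (k n) (\<theta>0 n)) f0) \<in> o[at_top](\<lambda>n. real n powr (- \<delta>)) \<and>
        (\<lambda>n. \<Sum>i<nparams p (k n). (\<theta>0 n i)\<^sup>2) \<in> o[at_top](\<lambda>n. real n powr (1 - \<delta>))"
  shows "\<forall>\<kappa> > 0. \<forall>\<kappa>' > 0. \<forall>\<^sub>F n in at_top.
    (\<integral>\<^sup>+ \<omega> \<in> Nset p (k n) \<sigma>0 f0 (\<kappa> / real n powr \<delta>).
        ennreal (prior_density \<eta> \<zeta> (nparams p (k n)) \<omega>) \<partial>param_space (nparams p (k n)))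
      \<ge> ennreal (exp (- \<kappa>' * real n powr (1 - \<delta>)))"
proof (intro allI impI)
  fix \<kappa> \<kappa>' :: real
  assume \<kappa>: "\<kappa> > 0" and \<kappa>': "\<kappa>' > 0"
  obtain \<theta>0 :: "nat \<Rightarrow> nat \<Rightarrow> real" where
    fit: "(\<lambda>n. L2dist p (nnet p (k n) (\<theta>0 n)) f0) \<in> o(\<lambda>n. real n powr (- \<delta>))" and
    norm: "(\<lambda>n. \<Sum>i<nparams p (k n). (\<theta>0 n i)\<^sup>2) \<in> o(\<lambda>n. real n powr (1 - \<delta>))"
    using approx by blast
  define S where "S n = (\<Sum>i<nparams p (k n). (\<theta>0 n i)\<^sup>2)" for n
  have "a < 1 - \<delta>" using \<delta>(2) by linarith
  note size = network_size_bigo[OF kn a(1) \<delta>(1) this norm[folded S_def]]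
  obtain c where "c > 0" and small: "\<forall>\<^sub>F n in at_top. c / real n \<le> 1 \<and>
      (L2dist p (nnet p (k n) (\<theta>0 n)) f0)\<^sup>2 + (c / real n * ((real p + 2) * (1 + real (k n) + S n)))\<^sup>2
        \<le> \<sigma>0\<^sup>2 * \<kappa> / 2 * real n powr - \<delta>"
    using eventually_fit_bound[OF \<delta>(1) _ fit size(2), of "\<sigma>0\<^sup>2 * \<kappa> / 2"] \<sigma>0 \<kappa> by auto
  define t0 where "t0 = min 1 (\<kappa> / 4)"
  define cz where "cz = (2 * pi * \<zeta>\<^sup>2) powr (-1/2)"
  define G where "G = (2 * pi * \<eta>\<^sup>2) powr (-1/2) * exp (- (\<bar>ln (exp \<sigma>0 - 1)\<bar> + \<sigma>0)\<^sup>2 / (2 * \<eta>\<^sup>2))"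
  have "\<forall>\<^sub>F n in at_top. exp (- \<kappa>' * real n powr (1 - \<delta>))
      \<le> G * (\<sigma>0 * t0) * real n powr - \<delta> * exp (- (S n + nparams p (k n)) / \<zeta>\<^sup>2)
        * (2 * cz * c / real n) ^ nparams p (k n)"
    using \<open>c > 0\<close> \<sigma>0 \<eta> \<zeta> \<kappa>
    by (intro eventually_exp_le_mass_bound[OF a(1) \<delta>(1) \<open>a < 1 - \<delta>\<close> \<kappa>' _ _ _ size(1) norm[folded S_def]])
      (auto simp: G_def cz_def t0_def)
  then show "\<forall>\<^sub>F n in at_top.
    (\<integral>\<^sup>+ \<omega> \<in> Nset p (k n) \<sigma>0 f0 (\<kappa> / real n powr \<delta>).
        ennreal (prior_density \<eta> \<zeta> (nparams p (k n)) \<omega>) \<partial>param_space (nparams p (k n)))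
      \<ge> ennreal (exp (- \<kappa>' * real n powr (1 - \<delta>)))"
    using small eventually_gt_at_top[of 0]
  proof eventually_elim
    case (elim n)
    define e where "e = real n powr - \<delta>"
    have e: "0 < e" "e \<le> 1" "\<kappa> / real n powr \<delta> = \<kappa> * e"
      unfolding e_def using elim \<delta> by (simp_all add: powr_minus_divide ge_one_powr_ge_zero)
    have t0: "0 < t0" "t0 \<le> 1" "t0 \<le> \<kappa> / 4"
      unfolding t0_def using \<kappa> by auto
    have t: "0 < t0 * e" "t0 * e \<le> 1" "t0 * e \<le> \<kappa> / real n powr \<delta> / 4"
      unfolding e(3) using t0 e mult_le_one[of t0 e] mult_right_mono[OF t0(3), of e] by auto
    have w: "0 < c / real n" "c / real n \<le> 1"
      using \<open>c > 0\<close> elim by auto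
    have "(L2dist p (nnet p (k n) (\<theta>0 n)) f0)\<^sup>2
        + (c / real n * ((real p + 2) * (1 + real (k n) + S n)))\<^sup>2 \<le> \<sigma>0\<^sup>2 * (\<kappa> / real n powr \<delta>) / 2"
      using elim(2) unfolding e(3) e_def by simp
    from prior_mass_Nset_ge[OF f0_meas f0_sq \<sigma>0 \<eta> \<zeta> w t this[unfolded S_def]]
    have "ennreal (G * (\<sigma>0 * (t0 * e)) * exp (- (S n + nparams p (k n)) / \<zeta>\<^sup>2)
        * (2 * cz * (c / real n)) ^ nparams p (k n))
      \<le> (\<integral>\<^sup>+ \<omega> \<in> Nset p (k n) \<sigma>0 f0 (\<kappa> / real n powr \<delta>).
        ennreal (prior_density \<eta> \<zeta> (nparams p (k n)) \<omega>) \<partial>param_space (nparams p (k n)))"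
      unfolding G_def cz_def S_def .
    moreover have "G * (\<sigma>0 * (t0 * e)) = G * (\<sigma>0 * t0) * e" "2 * cz * (c / real n) = 2 * cz * c / real n"
      by simp_all
    ultimately show ?case
      using order.trans[OF ennreal_leI[OF elim(1)[folded e_def]]] by simp
  qed
qed

end
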